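(* Let $F>1$ and $s>0$ be constants. Consider the self-adjusting $(1,\lambda)$ EA (defined in the context) with update strength $F$ and success rate $s$, using either standard bit mutation with mutation probability $p\in O(1/n)\cap n^{-O(1)}$ or the heavy-tailed mutation operator with a constant $\beta>1$, on an everywhere hard function $f$ with constant $\varepsilon$ (i.e. $p_{\max}=O(n^{-\varepsilon})$) and $d+1=n^{o(\log n)}$ function values, started with an arbitrary search point and arbitrary offspring population size $\lambda_0$. Let $\lambda_2:=n^{\varepsilon/2}$ and let $\tau$ be the first generation where $\lambda_\tau\ge\lambda_2$. Then $E[\tau]=O(\log\lambda_2)$, and during these $\tau$ generations the algorithm makes only $\lambda_0+O(\lambda_2\log\lambda_2)$ function evaluations in expectation.
   Context: Search space $\{0,1\}^n$; asymptotics with respect to $n\to\infty$. W.l.o.g. $f$ takes values in $\{0,\dots,d\}$ with global optima at value $d$. Self-adjusting $(1,\lambda)$ EA: maintains a search point $x$ and real-valued $\lambda$ (rounded to a nearest integer when needed); $\lambda_t$ is the value in generation $t$. Each generation creates $\lambda$ offspring independently by mutating $x$ (one evaluation each), picks an offspring $y$ of maximum fitness (ties uniformly at random), sets $x\leftarrow y$ in any case, and sets $\lambda\leftarrow\max\{1,\lambda/F\}$ if $f(y)>f(x)$ and $\lambda\leftarrow F^{1/s}\lambda$ otherwise. Standard bit mutation with probability $p$ flips each bit independently with probability $p$. Heavy-tailed mutation with $\beta>1$ draws $\chi\in\{1,\dots,n/2\}$ with $\Pr[\chi=i]=i^{-\beta}/\sum_{j=1}^{n/2}j^{-\beta}$ and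 then does standard bit mutation with probability $\chi/n$. $p_x^+$ is the probability that a single offspring of $x$ has strictly larger fitness than $x$; $p_{\max}:=\max\{p_x^+ : f(x)<d\}$. $f$ is everywhere hard if $p_{\max}=O(n^{-\varepsilon})$ for some constant $0<\varepsilon<1$. *)

theory Defs
  imports "HOL-Probability.Probability" "HOL-Library.Landau_Symbols"
begin

text \<open>Search points of {0,1}^n are boolean lists of length n.\<close>

fun sbm :: "real \<Rightarrow> bool list \<Rightarrow> bool list pmf" where
  "sbm p [] = return_pmf []"
| "sbm p (b # bs) =
     bernoulli_pmf p \<bind> (\<lambda>c. sbm p bs \<bind> (\<lambda>r. return_pmf ((b \<noteq> c) # r)))"

definition chi_pmf :: "real \<Rightarrow> nat \<Rightarrow> nat pmf" where
  "chi_pmf \<beta> n = embed_pmf (\<lambda>i. if 1 \<le> i \<and> i \<le> n div 2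
      then real i powr (-\<beta>) / (\<Sum>j=1..n div 2. real j powr (-\<beta>)) else 0)"

definition heavy_tailed :: "real \<Rightarrow> bool list \<Rightarrow> bool list pmf" where
  "heavy_tailed \<beta> x = chi_pmf \<beta> (length x) \<bind> (\<lambda>k. sbm (real k / real (length x)) x)"

fun iid_list :: "nat \<Rightarrow> 'a pmf \<Rightarrow> 'a list pmf" where
  "iid_list 0 P = return_pmf []"
| "iid_list (Suc k) P = P \<bind> (\<lambda>y. iid_list k P \<bind> (\<lambda>ys. return_pmf (y # ys)))"

definition p_plus :: "(bool list \<Rightarrow> bool list pmf) \<Rightarrow> (bool list \<Rightarrow> nat) \<Rightarrow> bool list \<Rightarrow> real" where
  "p_plus mut g x = measure_pmf.prob (mut x) {y. g y > g x}"

text \<open>Everywhere hard with constant eps: p_max = O(n^-eps), where p_max(n) is the maximum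
  of p_plus over non-optimal points of length n (stated as a bound on all of them).\<close>
definition everywhere_hard ::
  "(bool list \<Rightarrow> bool list pmf) \<Rightarrow> (nat \<Rightarrow> bool list \<Rightarrow> nat) \<Rightarrow> (nat \<Rightarrow> nat) \<Rightarrow> real \<Rightarrow> bool" where
  "everywhere_hard mut f d \<epsilon> \<longleftrightarrow> (\<exists>c. eventually (\<lambda>n. \<forall>x. length x = n \<and> f n x < d n \<longrightarrow>
       p_plus mut (f n) x \<le> c * real n powr (-\<epsilon>)) at_top)"

text \<open>State = (x, lambda).
  lambda is rounded to the nearest integer to get the number of offspring;
  ties among best offspring are broken uniformly at random (over offspring).\<close>
definition ea_step :: "real \<Rightarrow> real \<Rightarrow> (bool list \<Rightarrow> nat) \<Rightarrow> (bool list \<Rightarrow> bool list pmf)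
    \<Rightarrow> bool list \<times> real \<Rightarrow> (bool list \<times> real) pmf" where
  "ea_step F s g mut st = (case st of (x, lam) \<Rightarrow>
     (let k = nat (round lam) in
      iid_list k (mut x) \<bind> (\<lambda>ys.
        let M = Max (g ` set ys) in
        pmf_of_set {i. i < k \<and> g (ys ! i) = M} \<bind> (\<lambda>i.
          let y = ys ! i in
          return_pmf (y, if g y > g x then max 1 (lam / F) else F powr (1 / s) * lam)))))"

fun traj :: "real \<Rightarrow> real \<Rightarrow> (bool list \<Rightarrow> nat) \<Rightarrow> (bool list \<Rightarrow> bool list pmf)
    \<Rightarrow> bool list \<Rightarrow> real \<Rightarrow> nat \<Rightarrow> (bool list \<times> real) list pmf" where
  "traj F s g mut x0 lam0 0 = return_pmf [(x0, lam0)]"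
| "traj F s g mut x0 lam0 (Suc t) = traj F s g mut x0 lam0 t \<bind>
     (\<lambda>h. ea_step F s g mut (last h) \<bind> (\<lambda>st. return_pmf (h @ [st])))"

text \<open>tau = first generation t with lambda_t >= L. Event tau > t: lambda_0..lambda_t all < L.
  E[tau] = sum over t of Pr[tau > t].\<close>
definition expected_tau :: "real \<Rightarrow> real \<Rightarrow> (bool list \<Rightarrow> nat) \<Rightarrow> (bool list \<Rightarrow> bool list pmf)
    \<Rightarrow> real \<Rightarrow> bool list \<Rightarrow> real \<Rightarrow> ennreal" where
  "expected_tau F s g mut L x0 lam0 =
     (\<Sum>t. emeasure (measure_pmf (traj F s g mut x0 lam0 t)) {h. \<forall>st\<in>set h. snd st < L})"

text \<open>Expected number of evaluations in generations 0..tau-1: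
  sum over t of E[ round(lambda_t) * 1{tau > t} ].\<close>
definition expected_evals :: "real \<Rightarrow> real \<Rightarrow> (bool list \<Rightarrow> nat) \<Rightarrow> (bool list \<Rightarrow> bool list pmf)
    \<Rightarrow> real \<Rightarrow> bool list \<Rightarrow> real \<Rightarrow> ennreal" where
  "expected_evals F s g mut L x0 lam0 =
     (\<Sum>t. \<integral>\<^sup>+ h. (if \<forall>st\<in>set h. snd st < L then ennreal (real (nat (round (snd (last h))))) else 0)
        \<partial>measure_pmf (traj F s g mut x0 lam0 t))"

end

theory Submission
  imports Defs "HOL-Real_Asymp.Real_Asymp"
begin

text \<open>While \<open>\<lambda> < L = n powr (\<epsilon>/2)\<close>, a generation creates at most \<open>2L\<close> offspring, so by the
  union bound and everywhere hardness it succeeds with probability \<open>O(L n^-\<epsilon>) = O(n^-\<epsilon>/2)\<close>,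
  eventually below \<open>1/(2s+2)\<close>. A failure multiplies \<open>\<lambda>\<close> by \<open>a = F^(1/s)\<close> and a success
  divides it by \<open>F\<close>, so the potential \<open>2 log_a (L/\<lambda>) + 2\<close> drops by 2 after a failure and
  grows by at most \<open>2 log_a F = 2s\<close> after a success: it decreases by at least 1 in
  expectation per generation. Additive drift bounds \<open>E[\<tau>]\<close> by the initial potential
  \<open>O(log L)\<close>, and the expected number of evaluations by \<open>2L\<close> times that, as each generation
  before \<open>\<tau>\<close> costs at most \<open>2L\<close> evaluations.\<close>

fun markov_path :: "('s \<Rightarrow> 's pmf) \<Rightarrow> 's \<Rightarrow> nat \<Rightarrow> 's list pmf" where
  "markov_path K s0 0 = return_pmf [s0]"
| "markov_path K s0 (Suc t) =
     markov_path K s0 t \<bind> (\<lambda>h. K (last h) \<bind> (\<lambda>s. return_pmf (h @ [s])))"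

lemma traj_eq_markov_path: "traj F s g mut x0 lam0 t = markov_path (ea_step F s g mut) (x0, lam0) t"
  by (induction t) simp_all

lemma markov_path_nonempty: "h \<in> set_pmf (markov_path K s0 t) \<Longrightarrow> h \<noteq> []"
  by (induction t arbitrary: h) auto

lemma markov_path_Suc_Cons:
  "markov_path K s0 (Suc t) = K s0 \<bind> (\<lambda>s. map_pmf ((#) s0) (markov_path K s t))"
proof (induction t)
  case 0
  show ?case by (simp add: bind_return_pmf)
next
  case (Suc t)
  have "markov_path K s0 (Suc (Suc t)) = K s0 \<bind> (\<lambda>s. map_pmf ((#) s0) (markov_path K s t) \<bind>
      (\<lambda>h. K (last h) \<bind> (\<lambda>s'. return_pmf (h @ [s']))))"
    by (simp only: markov_path.simps(2)[of K s0 "Suc t"] Suc bind_assoc_pmf)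
  also have "\<dots> = K s0 \<bind> (\<lambda>s. map_pmf ((#) s0) (markov_path K s (Suc t)))"
    by (auto intro!: bind_pmf_cong simp: bind_map_pmf map_bind_pmf
        dest: markov_path_nonempty)
  finally show ?case .
qed

text \<open>\<open>stopped_cost K A c s0 t\<close> is \<open>E[c(s_t) \<cdot> 1{\<tau> > t}]\<close> for the exit time \<open>\<tau>\<close> of the chain
  from \<open>A\<close>; \<open>expected_tau\<close> and \<open>expected_evals\<close> are its sums over \<open>t\<close>.\<close>

definition stopped_cost :: "('s \<Rightarrow> 's pmf) \<Rightarrow> ('s \<Rightarrow> bool) \<Rightarrow> ('s \<Rightarrow> ennreal) \<Rightarrow> 's \<Rightarrow> nat \<Rightarrow> ennreal"
  where "stopped_cost K A c s0 t =
    (\<integral>\<^sup>+h. (if \<forall>s\<in>set h. A s then c (last h) else 0) \<partial>markov_path K s0 t)"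

lemma stopped_cost_0: "stopped_cost K A c s0 0 = (if A s0 then c s0 else 0)"
  by (simp add: stopped_cost_def)

lemma stopped_cost_Suc:
  "stopped_cost K A c s0 (Suc t) = (if A s0 then \<integral>\<^sup>+s. stopped_cost K A c s t \<partial>K s0 else 0)"
proof -
  have "stopped_cost K A c s0 (Suc t) =
      (\<integral>\<^sup>+s. \<integral>\<^sup>+h. (if \<forall>s'\<in>set (s0 # h). A s' then c (last (s0 # h)) else 0) \<partial>markov_path K s t \<partial>K s0)"
    by (simp add: stopped_cost_def markov_path_Suc_Cons del: markov_path.simps)
  also have "\<dots> = (\<integral>\<^sup>+s. (if A s0 then stopped_cost K A c s t else 0) \<partial>K s0)"
    unfolding stopped_cost_def
    by (intro nn_integral_cong, cases "A s0")
      (auto intro!: nn_integral_cong_AE simp: AE_measure_pmf_iff dest: markov_path_nonempty)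
  finally show ?thesis by simp
qed

lemma additive_drift_stopped_cost:
  fixes G c :: "'s \<Rightarrow> ennreal"
  assumes invariant: "\<And>s s'. I s \<Longrightarrow> A s \<Longrightarrow> s' \<in> set_pmf (K s) \<Longrightarrow> I s'"
    and cost: "\<And>s. I s \<Longrightarrow> A s \<Longrightarrow> c s \<le> M"
    and drift: "\<And>s. I s \<Longrightarrow> A s \<Longrightarrow> (\<integral>\<^sup>+s'. G s' \<partial>K s) + 1 \<le> G s"
    and "I s0"
  shows "(\<Sum>t. stopped_cost K A c s0 t) \<le> M * G s0"
proof -
  have "(\<Sum>t<T. stopped_cost K A c s t) \<le> M * G s" if "I s" for T s
    using that
  proof (induction T arbitrary: s)
    case 0
    show ?case by simp
  next
    case (Suc T)
    show ?case
    proof (cases "A s")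
      case False
      then have "stopped_cost K A c s t = 0" for t
        by (cases t) (simp_all add: stopped_cost_0 stopped_cost_Suc)
      then show ?thesis by simp
    next
      case True
      have "(\<Sum>t<Suc T. stopped_cost K A c s t) =
          c s + (\<integral>\<^sup>+s'. (\<Sum>t<T. stopped_cost K A c s' t) \<partial>K s)"
        by (simp add: sum.lessThan_Suc_shift stopped_cost_0 stopped_cost_Suc True nn_integral_sum
            del: sum.lessThan_Suc)
      also have "\<dots> \<le> M + (\<integral>\<^sup>+s'. M * G s' \<partial>K s)"
        using cost[OF Suc.prems True] Suc.IH invariant[OF Suc.prems True]
        by (intro add_mono nn_integral_mono_AE) (auto simp: AE_measure_pmf_iff)
      also have "\<dots> = M * ((\<integral>\<^sup>+s'. G s' \<partial>K s) + 1)"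
        by (simp add: nn_integral_cmult distrib_left add.commute)
      also have "\<dots> \<le> M * G s"
        using drift[OF Suc.prems True] by (rule mult_left_mono) simp
      finally show ?thesis .
    qed
  qed
  then show ?thesis
    using \<open>I s0\<close> by (simp add: suminf_eq_SUP SUP_least)
qed

lemma sbm_preserves_length: "y \<in> set_pmf (sbm p x) \<Longrightarrow> length y = length x"
  by (induction x arbitrary: y) auto

lemma heavy_tailed_preserves_length: "y \<in> set_pmf (heavy_tailed \<beta> x) \<Longrightarrow> length y = length x"
  by (auto simp: heavy_tailed_def dest: sbm_preserves_length)

lemma set_pmf_iid_list: "ys \<in> set_pmf (iid_list k P) \<Longrightarrow> length ys = k \<and> set ys \<subseteq> set_pmf P"
  by (induction k arbitrary: ys) fastforce+

lemma emeasure_iid_list_exists_le: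
  "emeasure (iid_list k P) {ys. \<exists>y\<in>set ys. Q y} \<le> of_nat k * emeasure P {y. Q y}"
proof (induction k)
  case 0
  show ?case by simp
next
  case (Suc k)
  define E where "E = {ys. \<exists>y\<in>set ys. Q y}"
  have "emeasure (iid_list (Suc k) P) E = (\<integral>\<^sup>+y. \<integral>\<^sup>+ys. indicator E (y # ys) \<partial>iid_list k P \<partial>P)"
    by simp
  also have "\<dots> \<le> (\<integral>\<^sup>+y. \<integral>\<^sup>+ys. indicator {y. Q y} y + indicator E ys \<partial>iid_list k P \<partial>P)"
    by (intro nn_integral_mono) (auto simp: E_def indicator_def)
  also have "\<dots> = emeasure P {y. Q y} + emeasure (iid_list k P) E"
    by (simp add: nn_integral_add measure_pmf.emeasure_space_1)
  also have "\<dots> \<le> of_nat (Suc k) * emeasure P {y. Q y}"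
    using Suc by (simp add: E_def distrib_right add_left_mono)
  finally show ?case by (simp add: E_def)
qed

lemma best_offspring:
  assumes "ys \<in> set_pmf (iid_list k P)" "0 < k"
    and "i \<in> set_pmf (pmf_of_set {i. i < k \<and> g (ys ! i) = Max (g ` set ys)})"
  shows "ys ! i \<in> set ys" "ys ! i \<in> set_pmf P" "\<forall>y\<in>set ys. g y \<le> g (ys ! i)"
proof -
  have len: "length ys = k" and sub: "set ys \<subseteq> set_pmf P"
    using set_pmf_iid_list[OF assms(1)] by auto
  then have "Max (g ` set ys) \<in> g ` set ys"
    using \<open>0 < k\<close> by (intro Max_in) auto
  then have "{i. i < k \<and> g (ys ! i) = Max (g ` set ys)} \<noteq> {}"
    using len by (auto simp: in_set_conv_nth)
  then have i: "i < k" "g (ys ! i) = Max (g ` set ys)"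
    using assms(3) by auto
  then show "ys ! i \<in> set ys" "ys ! i \<in> set_pmf P" "\<forall>y\<in>set ys. g y \<le> g (ys ! i)"
    using len sub by auto
qed

lemma map_snd_ea_step:
  assumes "1 \<le> lam"
  shows "map_pmf snd (ea_step F s g mut (x, lam)) =
    map_pmf (\<lambda>ys. if \<exists>y\<in>set ys. g x < g y then max 1 (lam / F) else F powr (1 / s) * lam)
      (iid_list (nat (round lam)) (mut x))"
  unfolding ea_step_def Let_def map_bind_pmf map_return_pmf prod.case snd_conv
  unfolding map_pmf_def
proof (intro bind_pmf_cong refl)
  fix ys
  assume ys: "ys \<in> set_pmf (iid_list (nat (round lam)) (mut x))"
  have "0 < nat (round lam)"
    using assms of_int_round_ge[of lam] by linarith
  with ys have "(g x < g (ys ! i)) = (\<exists>y\<in>set ys. g x < g y)"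
    if "i \<in> set_pmf (pmf_of_set {i. i < nat (round lam) \<and> g (ys ! i) = Max (g ` set ys)})" for i
    using best_offspring[OF ys _ that] by (auto intro: less_le_trans)
  then show "pmf_of_set {i. i < nat (round lam) \<and> g (ys ! i) = Max (g ` set ys)} \<bind>
      (\<lambda>i. return_pmf (if g x < g (ys ! i) then max 1 (lam / F) else F powr (1 / s) * lam)) =
    return_pmf (if \<exists>y\<in>set ys. g x < g y then max 1 (lam / F) else F powr (1 / s) * lam)"
    by (subst bind_pmf_cong[OF refl, where g = "\<lambda>_. return_pmf _"]) auto
qed

lemma set_pmf_ea_step:
  assumes "1 < F" "0 < s" "1 \<le> lam" "st \<in> set_pmf (ea_step F s g mut (x, lam))"
  shows "fst st \<in> set_pmf (mut x)" "1 \<le> snd st"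
proof -
  have "0 < nat (round lam)"
    using assms(3) of_int_round_ge[of lam] by linarith
  then show "fst st \<in> set_pmf (mut x)"
    using assms(4) by (auto simp: ea_step_def Let_def dest: best_offspring(2))
  have "snd st \<in> set_pmf (map_pmf snd (ea_step F s g mut (x, lam)))"
    using assms(4) by simp
  then have "snd st = max 1 (lam / F) \<or> snd st = F powr (1 / s) * lam"
    unfolding map_snd_ea_step[OF assms(3)] by auto
  moreover have "1 * 1 \<le> F powr (1 / s) * lam"
    using assms(1-3) by (intro mult_mono ge_one_powr_ge_zero) auto
  ultimately show "1 \<le> snd st"
    by auto
qed

text \<open>The offset 2 ensures that a failure which lifts \<open>l\<close> from below \<open>L\<close> to above it,
  where the potential drops to 0, still lowers the potential by at least 2.\<close>

definition lambda_potential :: "real \<Rightarrow> real \<Rightarrow> real \<Rightarrow> real" where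
  "lambda_potential a L l = (if L \<le> l then 0 else 2 * log a (L / l) + 2)"

lemma lambda_potential_nonneg: "1 < a \<Longrightarrow> 0 < l \<Longrightarrow> 0 \<le> lambda_potential a L l"
  by (simp add: lambda_potential_def)

lemma lambda_potential_ge_2: "1 < a \<Longrightarrow> 0 < l \<Longrightarrow> l < L \<Longrightarrow> 2 \<le> lambda_potential a L l"
  by (simp add: lambda_potential_def)

lemma lambda_potential_le:
  "1 < a \<Longrightarrow> 1 \<le> l \<Longrightarrow> 1 \<le> L \<Longrightarrow> lambda_potential a L l \<le> 2 * log a L + 2"
  by (simp add: lambda_potential_def log_divide)

lemma lambda_potential_mult_base_le:
  assumes "1 < a" "0 < l" "l < L"
  shows "lambda_potential a L (a * l) \<le> lambda_potential a L l - 2"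
proof (cases "L \<le> a * l")
  case True
  then show ?thesis
    using lambda_potential_ge_2[OF assms] by (simp add: lambda_potential_def)
next
  case False
  have "log a (L / (a * l)) = log a (L / l) - 1"
    using assms by (simp add: log_divide log_mult)
  then show ?thesis
    using False assms by (simp add: lambda_potential_def)
qed

lemma lambda_potential_le_add_log:
  assumes "1 < a" "0 < l'" "0 < l" "l < L" "1 \<le> c" "l \<le> c * l'"
  shows "lambda_potential a L l' \<le> lambda_potential a L l + 2 * log a c"
proof (cases "L \<le> l'")
  case True
  then show ?thesis
    using lambda_potential_nonneg[of a l L] assms by (simp add: lambda_potential_def)
next
  case False
  have "log a l \<le> log a (c * l')"
    using assms by simp
  then have "log a (L / l') \<le> log a (L / l) + log a c"
    using assms False by (simp add: log_divide log_mult)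
  then show ?thesis
    using False assms by (simp add: lambda_potential_def)
qed

lemma lambda_potential_update_le:
  assumes "1 < F" "0 < s" "1 \<le> lam" "lam < L"
  shows "lambda_potential (F powr (1 / s)) L (if success then max 1 (lam / F) else F powr (1 / s) * lam)
    \<le> lambda_potential (F powr (1 / s)) L lam - 2 + (2 * s + 2) * of_bool success"
proof (cases success)
  case True
  have "lam \<le> F * max 1 (lam / F)"
    using \<open>1 < F\<close> mult_left_mono[of "lam / F" "max 1 (lam / F)" F] by simp
  moreover have "log (F powr (1 / s)) F = s"
    using \<open>1 < F\<close> by (simp add: log_base_powr)
  ultimately show ?thesis
    using True lambda_potential_le_add_log[of "F powr (1 / s)" "max 1 (lam / F)" lam L F] assms
    by simp
next
  case False
  then show ?thesis
    using lambda_potential_mult_base_le[of "F powr (1 / s)" lam L] assms by simp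
qed

lemma nat_round_le_double:
  "1 \<le> lam \<Longrightarrow> lam \<le> L \<Longrightarrow> real (nat (round lam)) \<le> 2 * L"
  using of_int_round_le[of lam] by (cases "0 \<le> round lam") auto

lemma emeasure_some_offspring_better_le:
  assumes "1 \<le> lam" "lam \<le> L"
  shows "emeasure (iid_list (nat (round lam)) (mut x)) {ys. \<exists>y\<in>set ys. g x < g y}
    \<le> ennreal (2 * L * p_plus mut g x)"
proof -
  have "emeasure (iid_list (nat (round lam)) (mut x)) {ys. \<exists>y\<in>set ys. g x < g y}
      \<le> of_nat (nat (round lam)) * emeasure (mut x) {y. g x < g y}"
    by (rule emeasure_iid_list_exists_le)
  also have "\<dots> = ennreal (real (nat (round lam)) * p_plus mut g x)"
    by (simp add: p_plus_def measure_pmf.emeasure_eq_measure ennreal_of_nat_eq_real_of_nat ennreal_mult)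
  also have "\<dots> \<le> ennreal (2 * L * p_plus mut g x)"
    using nat_round_le_double[OF assms]
    by (intro ennreal_leI mult_right_mono) (simp_all add: p_plus_def)
  finally show ?thesis .
qed

lemma nn_integral_lambda_potential_ea_step_le:
  fixes F s L lam :: real and mut :: "bool list \<Rightarrow> bool list pmf" and x :: "bool list"
    and g :: "bool list \<Rightarrow> nat"
  defines "a \<equiv> F powr (1 / s)" and "Y \<equiv> iid_list (nat (round lam)) (mut x)"
    and "E \<equiv> {ys. \<exists>y\<in>set ys. g x < g y}"
  assumes F: "1 < F" and s: "0 < s" and lam: "1 \<le> lam" "lam < L"
  shows "(\<integral>\<^sup>+st. lambda_potential a L (snd st) \<partial>ea_step F s g mut (x, lam))
    \<le> ennreal (lambda_potential a L lam - 2) + ennreal (2 * s + 2) * emeasure Y E"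
proof -
  define P where "P = lambda_potential a L"
  have P2: "2 \<le> P lam"
    using lambda_potential_ge_2[of a lam L] F s lam by (simp add: P_def a_def)
  have pointwise: "ennreal (P (if ys \<in> E then max 1 (lam / F) else a * lam))
      \<le> ennreal (P lam - 2) + ennreal (2 * s + 2) * indicator E ys" for ys
  proof -
    have "P (if ys \<in> E then max 1 (lam / F) else a * lam) \<le> P lam - 2 + (2 * s + 2) * of_bool (ys \<in> E)"
      using lambda_potential_update_le[OF F s lam, of "ys \<in> E"] by (simp only: P_def a_def)
    then have "ennreal (P (if ys \<in> E then max 1 (lam / F) else a * lam))
        \<le> ennreal (P lam - 2 + (2 * s + 2) * of_bool (ys \<in> E))"
      by (rule ennreal_leI)
    also have "\<dots> = ennreal (P lam - 2) + ennreal (2 * s + 2) * indicator E ys"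
      using P2 s by (subst ennreal_plus) auto
    finally show ?thesis .
  qed
  have "(\<integral>\<^sup>+st. P (snd st) \<partial>ea_step F s g mut (x, lam))
      = (\<integral>\<^sup>+l. P l \<partial>map_pmf snd (ea_step F s g mut (x, lam)))"
    by simp
  also have "\<dots> = (\<integral>\<^sup>+ys. P (if ys \<in> E then max 1 (lam / F) else a * lam) \<partial>Y)"
    unfolding map_snd_ea_step[OF lam(1)] E_def Y_def a_def by simp
  also have "\<dots> \<le> (\<integral>\<^sup>+ys. ennreal (P lam - 2) + ennreal (2 * s + 2) * indicator E ys \<partial>Y)"
    by (rule nn_integral_mono) (rule pointwise)
  also have "\<dots> = ennreal (P lam - 2) + ennreal (2 * s + 2) * emeasure Y E"
    by (simp add: nn_integral_add nn_integral_cmult_indicator measure_pmf.emeasure_space_1)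
  finally show ?thesis
    unfolding P_def .
qed

lemma ea_step_potential_drift:
  fixes F s L lam :: real
  defines "a \<equiv> F powr (1 / s)"
  assumes F: "1 < F" and s: "0 < s" and lam: "1 \<le> lam" "lam < L"
    and rare_success: "4 * (s + 1) * L * p_plus mut g x \<le> 1"
  shows "(\<integral>\<^sup>+st. lambda_potential a L (snd st) \<partial>ea_step F s g mut (x, lam)) + 1
    \<le> lambda_potential a L lam"
proof -
  define P where "P = lambda_potential a L"
  define Y where "Y = iid_list (nat (round lam)) (mut x)"
  define E where "E = {ys. \<exists>y\<in>set ys. g x < g y}"
  have "ennreal (2 * s + 2) * emeasure Y E \<le> ennreal (2 * s + 2) * ennreal (2 * L * p_plus mut g x)"
    unfolding E_def Y_def using lam by (intro mult_left_mono emeasure_some_offspring_better_le) auto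
  also have "\<dots> = ennreal (4 * (s + 1) * L * p_plus mut g x)"
    using s by (subst ennreal_mult'[symmetric]) (simp_all add: algebra_simps)
  also have "\<dots> \<le> 1"
    using rare_success by simp
  finally have "(\<integral>\<^sup>+st. P (snd st) \<partial>ea_step F s g mut (x, lam)) \<le> ennreal (P lam - 2) + 1"
    using nn_integral_lambda_potential_ea_step_le[OF F s lam, of g mut x]
    unfolding P_def a_def Y_def E_def by (meson add_left_mono order.trans)
  then have "(\<integral>\<^sup>+st. P (snd st) \<partial>ea_step F s g mut (x, lam)) + 1 \<le> ennreal (P lam - 2) + 1 + 1"
    by (rule add_right_mono)
  also have "\<dots> = ennreal (P lam)"
    using ennreal_plus[of "P lam - 2" 2] lambda_potential_ge_2[of a lam L] F s lam
    by (simp add: P_def a_def add.assoc one_add_one)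
  finally show ?thesis
    unfolding P_def .
qed

lemma expected_tau_eq_stopped_cost:
  "expected_tau F s g mut L x0 lam0 =
    (\<Sum>t. stopped_cost (ea_step F s g mut) (\<lambda>st. snd st < L) (\<lambda>_. 1) (x0, lam0) t)"
  unfolding expected_tau_def stopped_cost_def traj_eq_markov_path
  by (rule suminf_cong, rule nn_integral_indicator[symmetric, THEN trans])
    (auto intro!: nn_integral_cong simp: indicator_def)

lemma expected_evals_eq_stopped_cost:
  "expected_evals F s g mut L x0 lam0 =
    (\<Sum>t. stopped_cost (ea_step F s g mut) (\<lambda>st. snd st < L)
      (\<lambda>st. ennreal (real (nat (round (snd st))))) (x0, lam0) t)"
  unfolding expected_evals_def stopped_cost_def traj_eq_markov_path ..

lemma ea_expected_tau_evals_le: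
  fixes F s L lam0 :: real
  defines "a \<equiv> F powr (1 / s)"
  assumes F: "1 < F" and s: "0 < s" and L: "1 \<le> L" and lam0: "1 \<le> lam0"
    and mut_length: "\<And>x y. y \<in> set_pmf (mut x) \<Longrightarrow> length y = length x"
    and rare_success: "\<And>x. length x = length x0 \<Longrightarrow> 4 * (s + 1) * L * p_plus mut g x \<le> 1"
  shows "expected_tau F s g mut L x0 lam0 \<le> ennreal (2 * log a L + 2)"
    and "expected_evals F s g mut L x0 lam0 \<le> ennreal (2 * L * (2 * log a L + 2))"
proof -
  define I where "I = (\<lambda>st :: bool list \<times> real. length (fst st) = length x0 \<and> 1 \<le> snd st)"
  define G where "G = (\<lambda>st :: bool list \<times> real. ennreal (lambda_potential a L (snd st)))"
  have invariant: "I st'" if "I st" "snd st < L" "st' \<in> set_pmf (ea_step F s g mut st)" for st st'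
    using set_pmf_ea_step[OF F s, where lam = "snd st" and x = "fst st" and st = st' and g = g
        and mut = mut] that mut_length
    by (auto simp: I_def)
  have cost: "ennreal (real (nat (round (snd st)))) \<le> ennreal (2 * L)" if "I st" "snd st < L" for st
    using nat_round_le_double[of "snd st" L] that by (simp add: I_def ennreal_leI)
  have drift: "(\<integral>\<^sup>+st'. G st' \<partial>ea_step F s g mut st) + 1 \<le> G st" if "I st" "snd st < L" for st
    using ea_step_potential_drift[OF F s, where lam = "snd st" and L = L and mut = mut and g = g
        and x = "fst st"] rare_success[of "fst st"] that
    by (simp add: G_def I_def a_def)
  have init: "I (x0, lam0)"
    using lam0 by (simp add: I_def)
  have "1 < a"
    using F s by (simp add: a_def)
  have start: "G (x0, lam0) \<le> ennreal (2 * log a L + 2)"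
    unfolding G_def snd_conv using lambda_potential_le[OF \<open>1 < a\<close> lam0 L] by (rule ennreal_leI)
  have "expected_tau F s g mut L x0 lam0 \<le> 1 * G (x0, lam0)"
    unfolding expected_tau_eq_stopped_cost
    by (rule additive_drift_stopped_cost[where I = I, OF invariant _ drift init]) simp_all
  then show "expected_tau F s g mut L x0 lam0 \<le> ennreal (2 * log a L + 2)"
    using start by simp
  have "expected_evals F s g mut L x0 lam0 \<le> ennreal (2 * L) * G (x0, lam0)"
    unfolding expected_evals_eq_stopped_cost
    by (rule additive_drift_stopped_cost[where I = I, OF invariant cost drift init])
  also have "\<dots> \<le> ennreal (2 * L) * ennreal (2 * log a L + 2)"
    by (rule mult_left_mono[OF start]) simp
  also have "\<dots> = ennreal (2 * L * (2 * log a L + 2))"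
    using L by (intro ennreal_mult'[symmetric]) simp
  finally show "expected_evals F s g mut L x0 lam0 \<le> ennreal (2 * L * (2 * log a L + 2))" .
qed

lemma ea_expected_tau_evals_le_ln:
  fixes F s L lam0 :: real
  defines "C \<equiv> 4 / ln (F powr (1 / s)) + 4"
  assumes F: "1 < F" and s: "0 < s" and L: "exp 1 \<le> L" and lam0: "1 \<le> lam0"
    and mut_length: "\<And>x y. y \<in> set_pmf (mut x) \<Longrightarrow> length y = length x"
    and rare_success: "\<And>x. length x = length x0 \<Longrightarrow> 4 * (s + 1) * L * p_plus mut g x \<le> 1"
  shows "expected_tau F s g mut L x0 lam0 \<le> ennreal (C * ln L)"
    and "expected_evals F s g mut L x0 lam0 \<le> ennreal (lam0 + C * L * ln L)"
proof -
  define a where "a = F powr (1 / s)"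
  have "0 < ln a"
    using F s by (simp add: a_def)
  have L1: "1 \<le> L" and lnL: "1 \<le> ln L"
    using L order.trans[OF one_le_exp_iff[THEN iffD2] L] by (auto simp: ln_ge_iff)
  note bounds = ea_expected_tau_evals_le[OF F s L1 lam0 mut_length rare_success, folded a_def]
  have log_le: "2 * log a L + 2 \<le> C / 2 * ln L"
    using \<open>0 < ln a\<close> lnL by (simp add: C_def a_def log_def field_simps)
  have "0 < 4 / ln a"
    using \<open>0 < ln a\<close> by simp
  then have "0 \<le> C / 2 * ln L"
    using lnL unfolding C_def a_def[symmetric] by simp
  with log_le have "2 * log a L + 2 \<le> C * ln L"
    by linarith
  then show "expected_tau F s g mut L x0 lam0 \<le> ennreal (C * ln L)"
    using bounds(1) by (meson ennreal_leI order.trans)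
  have "2 * L * (2 * log a L + 2) \<le> 2 * L * (C / 2 * ln L)"
    using log_le L1 by (intro mult_left_mono) auto
  then have "2 * L * (2 * log a L + 2) \<le> C * L * ln L"
    by (simp add: mult_ac)
  then have "2 * L * (2 * log a L + 2) \<le> lam0 + C * L * ln L"
    using lam0 by linarith
  then show "expected_evals F s g mut L x0 lam0 \<le> ennreal (lam0 + C * L * ln L)"
    using bounds(2) by (meson ennreal_leI order.trans)
qed

lemma p_plus_eq_0_if_no_better:
  "(\<And>y. y \<in> set_pmf (mut x) \<Longrightarrow> g y \<le> g x) \<Longrightarrow> p_plus mut g x = 0"
  unfolding p_plus_def measure_pmf_zero_iff by (auto dest: leD)

lemma everywhere_hard_success_small:
  assumes hard: "everywhere_hard mut f d \<epsilon>" and "0 < \<epsilon>" and "0 \<le> K"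
    and f_le: "\<forall>n x. length x = n \<longrightarrow> f n x \<le> d n"
    and mut_length: "\<And>x y. y \<in> set_pmf (mut x) \<Longrightarrow> length y = length x"
  shows "eventually (\<lambda>n. \<forall>x. length x = n \<longrightarrow> K * real n powr (\<epsilon>/2) * p_plus mut (f n) x \<le> 1) at_top"
proof -
  obtain c where c: "eventually (\<lambda>n. \<forall>x. length x = n \<and> f n x < d n \<longrightarrow>
      p_plus mut (f n) x \<le> c * real n powr (-\<epsilon>)) at_top"
    using hard by (auto simp: everywhere_hard_def)
  have "((\<lambda>n. K * c * real n powr (-\<epsilon>/2)) \<longlongrightarrow> 0) at_top"
    using \<open>0 < \<epsilon>\<close> by real_asymp
  then have small: "eventually (\<lambda>n. K * c * real n powr (-\<epsilon>/2) < 1) at_top"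
    by (rule order_tendstoD) simp
  have bound: "K * real n powr (\<epsilon>/2) * p_plus mut (f n) x \<le> 1"
    if "\<forall>x. length x = n \<and> f n x < d n \<longrightarrow> p_plus mut (f n) x \<le> c * real n powr (-\<epsilon>)"
      and "K * c * real n powr (-\<epsilon>/2) < 1" and "length x = n" for n x
  proof (cases "f n x < d n")
    case True
    then have "K * real n powr (\<epsilon>/2) * p_plus mut (f n) x \<le> K * real n powr (\<epsilon>/2) * (c * real n powr (-\<epsilon>))"
      using that(1,3) \<open>0 \<le> K\<close> by (intro mult_left_mono) auto
    also have "\<dots> = K * c * real n powr (-\<epsilon>/2)"
      by (simp add: powr_add[symmetric])
    finally show ?thesis
      using that(2) by linarith
  next
    case False
    have "f n y \<le> f n x" if "y \<in> set_pmf (mut x)" for y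
    proof -
      have "f n y \<le> d n"
        using mut_length[OF that] \<open>length x = n\<close> by (intro f_le[rule_format]) simp
      then show ?thesis
        using False by simp
    qed
    then show ?thesis
      using p_plus_eq_0_if_no_better[of mut x "f n"] by simp
  qed
  show ?thesis
    using eventually_conj[OF c small] by (rule eventually_mono) (intro allI impI bound; simp)
qed

theorem lemma3p2:
  fixes F s \<epsilon> :: real
    and f :: "nat \<Rightarrow> bool list \<Rightarrow> nat" and d :: "nat \<Rightarrow> nat"
    and mut :: "bool list \<Rightarrow> bool list pmf"
  assumes "F > 1" and "s > 0" and "0 < \<epsilon>" and "\<epsilon> < 1"
    and "\<forall>n x. length x = n \<longrightarrow> f n x \<le> d n"
    and "\<forall>n. \<exists>x. length x = n \<and> f n x = d n"
    and "(\<lambda>n. ln (real (d n) + 1)) \<in> o(\<lambda>n. (ln (real n))^2)"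
    and "(\<exists>p :: nat \<Rightarrow> real. mut = (\<lambda>x. sbm (p (length x)) x)
            \<and> p \<in> O(\<lambda>n. 1 / real n)
            \<and> (\<exists>c. eventually (\<lambda>n. real n powr (-c) \<le> p n) at_top))
         \<or> (\<exists>\<beta>>1. mut = heavy_tailed \<beta>)"
    and "everywhere_hard mut f d \<epsilon>"
  shows "\<exists>C. eventually (\<lambda>n. \<forall>x0 lam0. length x0 = n \<and> lam0 \<ge> 1 \<longrightarrow>
            expected_tau F s (f n) mut (real n powr (\<epsilon>/2)) x0 lam0
              \<le> ennreal (C * ln (real n powr (\<epsilon>/2)))
          \<and> expected_evals F s (f n) mut (real n powr (\<epsilon>/2)) x0 lam0
              \<le> ennreal (lam0 + C * real n powr (\<epsilon>/2) * ln (real n powr (\<epsilon>/2)))) at_top"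
proof -
  have mut_length: "\<And>x y. y \<in> set_pmf (mut x) \<Longrightarrow> length y = length x"
    using assms(8) by (auto dest: sbm_preserves_length heavy_tailed_preserves_length)
  have rare_success: "eventually (\<lambda>n. \<forall>x. length x = n \<longrightarrow>
      4 * (s + 1) * real n powr (\<epsilon>/2) * p_plus mut (f n) x \<le> 1) at_top"
    using everywhere_hard_success_small[OF assms(9,3) _ assms(5) mut_length] \<open>0 < s\<close> by simp
  have large: "eventually (\<lambda>n. exp 1 \<le> real n powr (\<epsilon>/2)) at_top"
    using \<open>0 < \<epsilon>\<close> by real_asymp
  show ?thesis
  proof (intro exI[of _ "4 / ln (F powr (1 / s)) + 4"]
      eventually_mono[OF eventually_conj[OF rare_success large]] allI impI)
    fix n :: nat and x0 :: "bool list" and lam0 :: real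
    assume "(\<forall>x. length x = n \<longrightarrow> 4 * (s + 1) * real n powr (\<epsilon>/2) * p_plus mut (f n) x \<le> 1)
        \<and> exp 1 \<le> real n powr (\<epsilon>/2)"
      and "length x0 = n \<and> 1 \<le> lam0"
    then show "expected_tau F s (f n) mut (real n powr (\<epsilon>/2)) x0 lam0
        \<le> ennreal ((4 / ln (F powr (1 / s)) + 4) * ln (real n powr (\<epsilon>/2)))
      \<and> expected_evals F s (f n) mut (real n powr (\<epsilon>/2)) x0 lam0
        \<le> ennreal (lam0 + (4 / ln (F powr (1 / s)) + 4) * real n powr (\<epsilon>/2) * ln (real n powr (\<epsilon>/2)))"
      using ea_expected_tau_evals_le_ln[OF assms(1,2), of "real n powr (\<epsilon>/2)" lam0 mut x0 "f n"]
        mut_length by simp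
  qed
qed

end
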